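(* Let $Y$ be a finite connected simple undirected graph on $n$ vertices and $e=\{v,w\}$ a cycle-edge of $Y$. Let $Y'$ be $Y$ with $e$ deleted and $Y''$ be $Y$ with $e$ contracted. Define $\Theta\colon\mathsf{Acyc}(Y)/\!\sim_\kappa\to\big(\mathsf{Acyc}(Y')/\!\sim_\kappa\big)\sqcup\big(\mathsf{Acyc}(Y'')/\!\sim_\kappa\big)$ as follows: if the class $[O_Y]$ contains an orientation $O^\pi_Y$ with $\pi=(v,w,\pi_3,\dots,\pi_n)$, then $\Theta([O_Y])$ is the $\kappa$-class in $Y''$ of the induced orientation $O^\pi_{Y''}$; otherwise $\Theta([O_Y])$ is the $\kappa$-class in $Y'$ of the restriction $O_{Y'}$ of any element $O_Y$ of the class. Then $\Theta$ is a bijection.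
   Context: A cycle-edge is an edge whose removal does not disconnect its component. $Y''$ is the simple graph obtained by identifying $v$ and $w$ into one vertex, removing $e$ and identifying parallel edges. $\mathsf{Acyc}(Z)$ denotes the set of acyclic orientations of a graph $Z$. For a permutation $\pi=(\pi_1,\dots,\pi_n)$ of the vertices, $O^\pi_Y$ is the acyclic orientation with each edge $\{i,j\}$ directed $(i,j)$ iff $i$ precedes $j$ in $\pi$; when $\pi$ starts with $v,w$, $O^\pi_{Y''}$ is the induced acyclic orientation of $Y''$ (edges keep their orientation). A click at a vertex $x$ which is a source reverses all edges incident to $x$; two acyclic orientations of a graph are $\kappa$-equivalent if one can be transformed into the other by a finite sequence of clicks, and $\mathsf{Acyc}(Z)/\!\sim_\kappa$ is the set of $\kappa$-classes. *)

theory Defs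
  imports Main
begin

definition simple_graph :: "'a set \<Rightarrow> 'a set set \<Rightarrow> bool" where
  "simple_graph V E \<longleftrightarrow> finite V \<and>
     (\<forall>f\<in>E. \<exists>a b. f = {a, b} \<and> a \<noteq> b \<and> a \<in> V \<and> b \<in> V)"

definition adj :: "'a set set \<Rightarrow> ('a \<times> 'a) set" where
  "adj E = {(a, b). {a, b} \<in> E}"

definition connected_graph :: "'a set \<Rightarrow> 'a set set \<Rightarrow> bool" where
  "connected_graph V E \<longleftrightarrow> V \<noteq> {} \<and> (\<forall>a\<in>V. \<forall>b\<in>V. (a, b) \<in> (adj E)\<^sup>*)"

definition cycle_edge :: "'a set set \<Rightarrow> 'a set \<Rightarrow> bool" where
  "cycle_edge E e \<longleftrightarrow> e \<in> E \<and> (\<forall>a b. e = {a, b} \<longrightarrow> (a, b) \<in> (adj (E - {e}))\<^sup>*)"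

definition is_orientation :: "'a set set \<Rightarrow> ('a \<times> 'a) set \<Rightarrow> bool" where
  "is_orientation E Ori \<longleftrightarrow> (\<forall>(a, b)\<in>Ori. {a, b} \<in> E) \<and>
     (\<forall>a b. {a, b} \<in> E \<longrightarrow> ((a, b) \<in> Ori \<longleftrightarrow> (b, a) \<notin> Ori))"

definition Acyc :: "'a set set \<Rightarrow> ('a \<times> 'a) set set" where
  "Acyc E = {Ori. is_orientation E Ori \<and> acyclic Ori}"

definition is_source :: "('a \<times> 'a) set \<Rightarrow> 'a \<Rightarrow> bool" where
  "is_source Ori x \<longleftrightarrow> (\<forall>y. (y, x) \<notin> Ori)"

definition click :: "('a \<times> 'a) set \<Rightarrow> 'a \<Rightarrow> ('a \<times> 'a) set" where
  "click Ori x = {(a, b). ((a, b) \<in> Ori \<and> a \<noteq> x \<and> b \<noteq> x) \<or> ((b, a) \<in> Ori \<and> (a = x \<or> b = x))}"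

definition click_rel :: "'a set \<Rightarrow> 'a set set \<Rightarrow> (('a \<times> 'a) set \<times> ('a \<times> 'a) set) set" where
  "click_rel V E = {(Ori, click Ori x) | Ori x. Ori \<in> Acyc E \<and> x \<in> V \<and> is_source Ori x}"

definition kappa_rel :: "'a set \<Rightarrow> 'a set set \<Rightarrow> (('a \<times> 'a) set \<times> ('a \<times> 'a) set) set" where
  "kappa_rel V E = Restr ((click_rel V E)\<^sup>*) (Acyc E)"

definition kappa_classes :: "'a set \<Rightarrow> 'a set set \<Rightarrow> ('a \<times> 'a) set set set" where
  "kappa_classes V E = Acyc E // kappa_rel V E"

definition kappa_class :: "'a set \<Rightarrow> 'a set set \<Rightarrow> ('a \<times> 'a) set \<Rightarrow> ('a \<times> 'a) set set" where
  "kappa_class V E Ori = kappa_rel V E `` {Ori}"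

definition is_perm :: "'a set \<Rightarrow> 'a list \<Rightarrow> bool" where
  "is_perm V \<pi> \<longleftrightarrow> distinct \<pi> \<and> set \<pi> = V"

definition perm_orient :: "'a set set \<Rightarrow> 'a list \<Rightarrow> ('a \<times> 'a) set" where
  "perm_orient E \<pi> = {(a, b). {a, b} \<in> E \<and>
      (\<exists>i j. i < j \<and> j < length \<pi> \<and> \<pi> ! i = a \<and> \<pi> ! j = b)}"

text \<open>Contraction of e = {v,w}: w is identified with v.\<close>
definition cmap :: "'a \<Rightarrow> 'a \<Rightarrow> 'a \<Rightarrow> 'a" where
  "cmap v w x = (if x = w then v else x)"

definition contract_vertices :: "'a set \<Rightarrow> 'a \<Rightarrow> 'a \<Rightarrow> 'a set" where
  "contract_vertices V v w = V - {w}"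

definition contract_edges :: "'a set set \<Rightarrow> 'a \<Rightarrow> 'a \<Rightarrow> 'a set set" where
  "contract_edges E v w = {cmap v w ` f | f. f \<in> E \<and> f \<noteq> {v, w}}"

definition contract_orient :: "'a \<Rightarrow> 'a \<Rightarrow> ('a \<times> 'a) set \<Rightarrow> ('a \<times> 'a) set" where
  "contract_orient v w Ori = {(cmap v w a, cmap v w b) | a b. (a, b) \<in> Ori \<and> {a, b} \<noteq> {v, w}}"

definition delete_orient :: "'a \<Rightarrow> 'a \<Rightarrow> ('a \<times> 'a) set \<Rightarrow> ('a \<times> 'a) set" where
  "delete_orient v w Ori = Ori - {(v, w), (w, v)}"

definition starts_vw :: "'a set \<Rightarrow> 'a \<Rightarrow> 'a \<Rightarrow> 'a list \<Rightarrow> bool" where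
  "starts_vw V v w \<pi> \<longleftrightarrow> is_perm V \<pi> \<and> (\<exists>rest. \<pi> = v # w # rest)"

definition Theta :: "'a set \<Rightarrow> 'a set set \<Rightarrow> 'a \<Rightarrow> 'a \<Rightarrow> ('a \<times> 'a) set set
     \<Rightarrow> ('a \<times> 'a) set set + ('a \<times> 'a) set set" where
  "Theta V E v w C =
     (if \<exists>\<pi>. starts_vw V v w \<pi> \<and> perm_orient E \<pi> \<in> C
      then Inr (kappa_class (contract_vertices V v w) (contract_edges E v w)
                  (contract_orient v w (perm_orient E (SOME \<pi>. starts_vw V v w \<pi> \<and> perm_orient E \<pi> \<in> C))))
      else Inl (kappa_class V (E - {{v, w}}) (delete_orient v w (SOME Ori. Ori \<in> C))))"

end

theory Submission
  imports Defs
begin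

text \<open>Every \<kappa>-class contains exactly one acyclic orientation in which v is the unique
  source (existence: clicking sources other than v must stop; uniqueness: by counting clicks).
  So Theta may be computed on these representatives. If in a representative P the only
  in-neighbour of w is v, then P = O^\<pi> for a permutation \<pi> starting with v, w, and
  contracting e gives a representative for Y''; otherwise deleting e gives a representative
  for Y'. Both constructions are undone by re-inserting the arc (v, w), respectively by pulling
  the orientation of Y'' back along the contraction.\<close>

lemma bij_betw_map_sum:
  assumes "bij_betw f A B" "bij_betw g C D"
  shows "bij_betw (map_sum f g) (A <+> C) (B <+> D)"
proof (rule bij_betw_byWitness[where f' = "map_sum (inv_into A f) (inv_into C g)"])
  show "\<forall>a\<in>A <+> C. map_sum (inv_into A f) (inv_into C g) (map_sum f g a) = a"
    using assms by (auto simp: bij_betw_def)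
  show "\<forall>a\<in>B <+> D. map_sum f g (map_sum (inv_into A f) (inv_into C g) a) = a"
    using assms by (auto simp: bij_betw_def f_inv_into_f)
  show "map_sum f g ` (A <+> C) \<subseteq> B <+> D"
    using assms by (auto simp: bij_betw_def)
  show "map_sum (inv_into A f) (inv_into C g) ` (B <+> D) \<subseteq> A <+> C"
    using assms by (auto simp: bij_betw_def inv_into_into)
qed

section \<open>Acyclic relations and orientations\<close>

lemma acyclic_has_minimal:
  assumes "finite S" "acyclic R" "S \<noteq> {}"
  shows "\<exists>m\<in>S. \<forall>y\<in>S. (y, m) \<notin> R"
proof -
  have "finite (R \<inter> S \<times> S)" using assms(1) by auto
  moreover have "acyclic (R \<inter> S \<times> S)" using assms(2) acyclic_subset by blast
  ultimately have "wf (R \<inter> S \<times> S)" by (rule finite_acyclic_wf)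
  moreover obtain x where "x \<in> S" using assms(3) by blast
  ultimately show ?thesis
    using wf_eq_minimal[THEN iffD1, rule_format, of "R \<inter> S \<times> S" x S] by blast
qed

lemma acyclic_has_source_in:
  assumes "finite S" "S \<noteq> {}" "acyclic R" and closed: "\<forall>a b. (a, b) \<in> R \<longrightarrow> b \<in> S \<longrightarrow> a \<in> S"
  shows "\<exists>s\<in>S. is_source R s"
  using acyclic_has_minimal[OF assms(1,3,2)] closed unfolding is_source_def by blast

lemma acyclic_by_source:
  assumes "acyclic Q" and "\<forall>a. (a, r) \<notin> R" and "\<forall>a b. (a, b) \<in> R \<longrightarrow> a \<noteq> r \<longrightarrow> (a, b) \<in> Q"
  shows "acyclic R"
proof -
  have "b \<noteq> r \<and> (a \<noteq> r \<longrightarrow> (a, b) \<in> Q\<^sup>+)" if "(a, b) \<in> R\<^sup>+" for a b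
    using that
  proof (induction rule: trancl_induct)
    case (base y)
    then show ?case using assms by blast
  next
    case (step y z)
    then show ?case using assms by (metis trancl.simps)
  qed
  with assms(1) show ?thesis unfolding acyclic_def by blast
qed

lemma acyclic_by_sink:
  assumes "acyclic Q" and "\<forall>b. (r, b) \<notin> R" and "\<forall>a b. (a, b) \<in> R \<longrightarrow> b \<noteq> r \<longrightarrow> (a, b) \<in> Q"
  shows "acyclic R"
proof -
  have "acyclic (R\<inverse>)"
    by (rule acyclic_by_source[of "Q\<inverse>" r]) (use assms in auto)
  then show ?thesis by simp
qed

lemma acyclic_inv_image:
  assumes "acyclic R"
  shows "acyclic (inv_image R f)"
proof -
  have "(f a, f b) \<in> R\<^sup>+" if "(a, b) \<in> (inv_image R f)\<^sup>+" for a b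
    using that by induction (auto intro: trancl_into_trancl)
  with assms show ?thesis unfolding acyclic_def by blast
qed

lemma acyclic_no_loop: "acyclic Q \<Longrightarrow> (a, a) \<notin> Q"
  unfolding acyclic_def by blast

lemma simple_graph_finite: "simple_graph V E \<Longrightarrow> finite V"
  unfolding simple_graph_def by blast

lemma simple_graph_edgeD: "simple_graph V E \<Longrightarrow> {a, b} \<in> E \<Longrightarrow> a \<noteq> b \<and> a \<in> V \<and> b \<in> V"
proof -
  assume "simple_graph V E" "{a, b} \<in> E"
  then obtain c d where "{a, b} = {c, d}" "c \<noteq> d" "c \<in> V" "d \<in> V"
    unfolding simple_graph_def by blast
  then show ?thesis by (auto simp: doubleton_eq_iff)
qed

lemma simple_graph_subset: "simple_graph V E \<Longrightarrow> E' \<subseteq> E \<Longrightarrow> simple_graph V E'"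
  unfolding simple_graph_def by blast

lemma orientation_arc_edge: "is_orientation E Q \<Longrightarrow> (a, b) \<in> Q \<Longrightarrow> {a, b} \<in> E"
  unfolding is_orientation_def by blast

lemma orientation_edge_iff: "is_orientation E Q \<Longrightarrow> {a, b} \<in> E \<Longrightarrow> (a, b) \<in> Q \<longleftrightarrow> (b, a) \<notin> Q"
  unfolding is_orientation_def by blast

lemma orientation_eq_if_subset:
  assumes "is_orientation E P" "is_orientation E Q" "P \<subseteq> Q"
  shows "P = Q"
proof
  show "Q \<subseteq> P"
  proof clarify
    fix a b assume "(a, b) \<in> Q"
    moreover have "{a, b} \<in> E" using orientation_arc_edge[OF assms(2) \<open>(a, b) \<in> Q\<close>] .
    ultimately show "(a, b) \<in> P"
      using assms(3) orientation_edge_iff[OF assms(1)] orientation_edge_iff[OF assms(2)] by blast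
  qed
qed (fact assms(3))

lemma AcycD: "Q \<in> Acyc E \<Longrightarrow> is_orientation E Q \<and> acyclic Q"
  unfolding Acyc_def by blast

lemma AcycI: "is_orientation E Q \<Longrightarrow> acyclic Q \<Longrightarrow> Q \<in> Acyc E"
  unfolding Acyc_def by blast

lemma Acyc_arcD: "simple_graph V E \<Longrightarrow> Q \<in> Acyc E \<Longrightarrow> (a, b) \<in> Q \<Longrightarrow> a \<in> V \<and> b \<in> V \<and> a \<noteq> b"
  using simple_graph_edgeD orientation_arc_edge AcycD by metis

lemma Acyc_has_source:
  assumes "simple_graph V E" "Q \<in> Acyc E" "V \<noteq> {}"
  shows "\<exists>s\<in>V. is_source Q s"
proof (rule acyclic_has_source_in)
  show "finite V" using simple_graph_finite[OF assms(1)] .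
  show "acyclic Q" using AcycD[OF assms(2)] by blast
  show "\<forall>a b. (a, b) \<in> Q \<longrightarrow> b \<in> V \<longrightarrow> a \<in> V" using Acyc_arcD[OF assms(1,2)] by blast
qed (fact assms(3))

section \<open>Clicks and \<kappa>-equivalence\<close>

lemma click_iff:
  "(a, b) \<in> click Q x \<longleftrightarrow> ((a, b) \<in> Q \<and> a \<noteq> x \<and> b \<noteq> x) \<or> ((b, a) \<in> Q \<and> (a = x \<or> b = x))"
  unfolding click_def by simp

lemma click_orientation:
  assumes "simple_graph V E" "is_orientation E Q"
  shows "is_orientation E (click Q x)"
  unfolding is_orientation_def
proof (intro conjI allI impI ballI)
  fix p assume "p \<in> click Q x"
  then obtain a b where p: "p = (a, b)" and "(a, b) \<in> Q \<or> (b, a) \<in> Q"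
    unfolding click_def by auto
  then have "{a, b} \<in> E" using orientation_arc_edge[OF assms(2)] by (metis insert_commute)
  then show "case p of (a, b) \<Rightarrow> {a, b} \<in> E" using p by simp
next
  fix a b assume e: "{a, b} \<in> E"
  have "a \<noteq> b" using simple_graph_edgeD[OF assms(1) e] by blast
  then show "(a, b) \<in> click Q x \<longleftrightarrow> (b, a) \<notin> click Q x"
    using orientation_edge_iff[OF assms(2) e] unfolding click_def by auto
qed

lemma click_Acyc:
  assumes "simple_graph V E" "Q \<in> Acyc E" "is_source Q x"
  shows "click Q x \<in> Acyc E"
proof (rule AcycI)
  show "is_orientation E (click Q x)" using click_orientation[OF assms(1)] AcycD[OF assms(2)] by blast
  show "acyclic (click Q x)"
  proof (rule acyclic_by_sink[of Q x])
    show "acyclic Q" using AcycD[OF assms(2)] by blast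
    show "\<forall>b. (x, b) \<notin> click Q x" "\<forall>a b. (a, b) \<in> click Q x \<longrightarrow> b \<noteq> x \<longrightarrow> (a, b) \<in> Q"
      using assms(3) unfolding click_def is_source_def by auto
  qed
qed

lemma click_click: "click (click Q x) x = Q"
  unfolding click_def by auto

definition clicks_in :: "'a set \<Rightarrow> 'a set set \<Rightarrow> (('a \<times> 'a) set \<times> ('a \<times> 'a) set) set" where
  "clicks_in S E = {(Q, click Q x) | Q x. Q \<in> Acyc E \<and> x \<in> S \<and> is_source Q x}"

lemma click_rel_eq_clicks_in: "click_rel V E = clicks_in V E"
  unfolding click_rel_def clicks_in_def by simp

lemma clicks_in_mono: "S \<subseteq> T \<Longrightarrow> clicks_in S E \<subseteq> clicks_in T E"
  unfolding clicks_in_def by blast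

lemma clicks_in_Acyc:
  assumes "simple_graph V E" "(P, Q) \<in> (clicks_in S E)\<^sup>*" "P \<in> Acyc E"
  shows "Q \<in> Acyc E"
  using assms(2,3) by induction (auto simp: clicks_in_def intro: click_Acyc[OF assms(1)])

lemma clicks_in_kappa_rel:
  assumes "simple_graph V E" "(P, Q) \<in> (clicks_in S E)\<^sup>*" "P \<in> Acyc E" "S \<subseteq> V"
  shows "(P, Q) \<in> kappa_rel V E"
proof -
  have "(P, Q) \<in> (click_rel V E)\<^sup>*"
    using rtrancl_mono[OF clicks_in_mono[OF assms(4)]] assms(2)
    unfolding click_rel_eq_clicks_in by blast
  then show ?thesis
    unfolding kappa_rel_def using assms(3) clicks_in_Acyc[OF assms(1-3)] by blast
qed

definition flip_cut :: "('a \<times> 'a) set \<Rightarrow> 'a set \<Rightarrow> ('a \<times> 'a) set" where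
  "flip_cut Q S = {(a, b). ((a, b) \<in> Q \<and> (a \<in> S \<longleftrightarrow> b \<in> S)) \<or> ((b, a) \<in> Q \<and> \<not> (a \<in> S \<longleftrightarrow> b \<in> S))}"

lemma flip_cut_by_clicks:
  assumes sg: "simple_graph V E"
  shows "finite S \<Longrightarrow> S \<subseteq> V \<Longrightarrow> Q \<in> Acyc E \<Longrightarrow> \<forall>a b. (a, b) \<in> Q \<longrightarrow> b \<in> S \<longrightarrow> a \<in> S
     \<Longrightarrow> (Q, flip_cut Q S) \<in> (clicks_in V E)\<^sup>*"
proof (induction "card S" arbitrary: S Q)
  case 0
  then have "flip_cut Q S = Q" unfolding flip_cut_def by auto
  then show ?case by simp
next
  case (Suc n)
  obtain s where s: "s \<in> S" "is_source Q s"
    using acyclic_has_source_in[of S Q] Suc.prems AcycD Suc.hyps(2) by fastforce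
  define Q1 where "Q1 = click Q s"
  have "(Q, Q1) \<in> clicks_in V E"
    unfolding clicks_in_def Q1_def using Suc.prems(2,3) s by blast
  moreover have "(Q1, flip_cut Q1 (S - {s})) \<in> (clicks_in V E)\<^sup>*"
  proof (rule Suc.hyps(1))
    show "n = card (S - {s})" using Suc.hyps(2) Suc.prems(1) s(1) by simp
    show "Q1 \<in> Acyc E" unfolding Q1_def using click_Acyc[OF sg Suc.prems(3) s(2)] .
    show "\<forall>a b. (a, b) \<in> Q1 \<longrightarrow> b \<in> S - {s} \<longrightarrow> a \<in> S - {s}"
      using Suc.prems(4) s unfolding Q1_def click_def is_source_def by auto
  qed (use Suc.prems in auto)
  ultimately have "(Q, flip_cut Q1 (S - {s})) \<in> (clicks_in V E)\<^sup>*"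
    by (rule converse_rtrancl_into_rtrancl)
  moreover have "flip_cut Q1 (S - {s}) = flip_cut Q S"
  proof (rule set_eqI, clarify)
    fix a b
    show "(a, b) \<in> flip_cut Q1 (S - {s}) \<longleftrightarrow> (a, b) \<in> flip_cut Q S"
      unfolding Q1_def flip_cut_def click_def using s(1) by (cases "a = s"; cases "b = s") auto
  qed
  ultimately show ?case by simp
qed

text \<open>A click at x is undone by clicking, in a suitable order, every other vertex.\<close>
lemma click_inverse_by_clicks:
  assumes sg: "simple_graph V E" and "Q \<in> Acyc E" "x \<in> V" "is_source Q x"
  shows "(click Q x, Q) \<in> (clicks_in V E)\<^sup>*"
proof -
  define Q1 where "Q1 = click Q x"
  have Q1: "Q1 \<in> Acyc E" unfolding Q1_def by (rule click_Acyc[OF sg assms(2,4)])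
  have "a \<in> V - {x}" if "(a, b) \<in> Q1" for a b
  proof -
    have "(b, x) \<notin> Q" using assms(4) unfolding is_source_def by blast
    then have "a \<noteq> x" using that unfolding Q1_def click_def by auto
    then show ?thesis using Acyc_arcD[OF sg Q1 that] by blast
  qed
  then have "(Q1, flip_cut Q1 (V - {x})) \<in> (clicks_in V E)\<^sup>*"
    using flip_cut_by_clicks[OF sg, of "V - {x}" Q1] simple_graph_finite[OF sg] Q1 by blast
  moreover have "flip_cut Q1 (V - {x}) = click Q1 x"
  proof (rule set_eqI, clarify)
    fix a b
    show "(a, b) \<in> flip_cut Q1 (V - {x}) \<longleftrightarrow> (a, b) \<in> click Q1 x"
      using Acyc_arcD[OF sg Q1, of a b] Acyc_arcD[OF sg Q1, of b a] assms(3)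
      unfolding flip_cut_def click_def by (cases "a = x"; cases "b = x") auto
  qed
  ultimately show ?thesis unfolding Q1_def click_click by simp
qed

lemma kappa_equiv:
  assumes sg: "simple_graph V E"
  shows "equiv (Acyc E) (kappa_rel V E)"
proof (rule equivI)
  show "kappa_rel V E \<subseteq> Acyc E \<times> Acyc E" unfolding kappa_rel_def by blast
  show "refl_on (Acyc E) (kappa_rel V E)" unfolding kappa_rel_def refl_on_def by blast
  have "(click_rel V E)\<inverse> \<subseteq> (click_rel V E)\<^sup>*"
    using click_inverse_by_clicks[OF sg] unfolding click_rel_eq_clicks_in clicks_in_def by blast
  then have "((click_rel V E)\<inverse>)\<^sup>* \<subseteq> (click_rel V E)\<^sup>*"
    by (simp add: rtrancl_subset_rtrancl)
  then show "sym (kappa_rel V E)"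
    unfolding kappa_rel_def sym_def by (auto simp: rtrancl_converse)
  show "trans (kappa_rel V E)" unfolding kappa_rel_def trans_def by auto
qed

section \<open>Representatives with a unique source\<close>

text \<open>c x counts the clicks at x on a click sequence from Q to P: an arc of Q keeps its
  direction exactly when its endpoints were clicked equally often, and otherwise its tail was
  clicked once more than its head.\<close>
definition click_counter :: "('a \<times> 'a) set \<Rightarrow> ('a \<times> 'a) set \<Rightarrow> ('a \<Rightarrow> nat) \<Rightarrow> bool" where
  "click_counter Q P c \<longleftrightarrow>
     (\<forall>a b. (a, b) \<in> Q \<longrightarrow> (c a = c b \<and> (a, b) \<in> P) \<or> (c a = Suc (c b) \<and> (b, a) \<in> P))"

lemma click_counter_click:
  assumes "click_counter Q P c" "P \<in> Acyc E" "is_source P x"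
  shows "click_counter Q (click P x) (c(x := Suc (c x)))"
  unfolding click_counter_def
proof (intro allI impI)
  fix a b assume "(a, b) \<in> Q"
  then have "(c a = c b \<and> (a, b) \<in> P) \<or> (c a = Suc (c b) \<and> (b, a) \<in> P)"
    using assms(1) unfolding click_counter_def by blast
  moreover have "(y, y) \<notin> P" for y using acyclic_no_loop[of P y] AcycD[OF assms(2)] by simp
  moreover have "(y, x) \<notin> P" for y using assms(3) unfolding is_source_def by blast
  ultimately show "((c(x := Suc (c x))) a = (c(x := Suc (c x))) b \<and> (a, b) \<in> click P x) \<or>
      ((c(x := Suc (c x))) a = Suc ((c(x := Suc (c x))) b) \<and> (b, a) \<in> click P x)"
    unfolding click_def by (cases "x = a"; cases "x = b") simp_all
qed

lemma clicks_in_click_counter: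
  assumes "(Q, P) \<in> (clicks_in S E)\<^sup>*"
  shows "\<exists>c. (\<forall>x. x \<notin> S \<longrightarrow> c x = 0) \<and> click_counter Q P c"
  using assms
proof (induction rule: rtrancl_induct)
  case base
  have "click_counter Q Q (\<lambda>_. 0)" unfolding click_counter_def by simp
  then show ?case by (intro exI[of _ "\<lambda>_. 0"]) simp
next
  case (step P P')
  obtain c where c: "\<forall>x. x \<notin> S \<longrightarrow> c x = 0" "click_counter Q P c" using step.IH by blast
  from step.hyps(2) obtain x where x: "P \<in> Acyc E" "x \<in> S" "is_source P x" "P' = click P x"
    unfolding clicks_in_def by blast
  have "click_counter Q P' (c(x := Suc (c x)))" using click_counter_click[OF c(2) x(1,3)] x(4) by simp
  moreover have "\<forall>y. y \<notin> S \<longrightarrow> (c(x := Suc (c x))) y = 0" using c(1) x(2) by auto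
  ultimately show ?case by blast
qed

text \<open>Along an edge the click counts differ by at most one.\<close>
lemma click_counter_le_walk_length:
  assumes "is_orientation E Q" "click_counter Q P c" "c r = 0"
  shows "(r, x) \<in> adj E ^^ k \<Longrightarrow> c x \<le> k"
proof (induction k arbitrary: x)
  case 0
  then show ?case using assms(3) by simp
next
  case (Suc k)
  then obtain y where y: "(r, y) \<in> adj E ^^ k" "{y, x} \<in> E" unfolding adj_def by auto
  have "(y, x) \<in> Q \<or> (x, y) \<in> Q" using orientation_edge_iff[OF assms(1) y(2)] by blast
  then have "c x \<le> Suc (c y)" using assms(2) unfolding click_counter_def by force
  then show ?case using Suc.IH[OF y(1)] by simp
qed

definition unique_source :: "'a set \<Rightarrow> ('a \<times> 'a) set \<Rightarrow> 'a \<Rightarrow> bool" where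
  "unique_source V P r \<longleftrightarrow> r \<in> V \<and> is_source P r \<and> (\<forall>x\<in>V. is_source P x \<longrightarrow> x = r)"

definition Acyc_rooted :: "'a set \<Rightarrow> 'a set set \<Rightarrow> 'a \<Rightarrow> ('a \<times> 'a) set set" where
  "Acyc_rooted V E r = {P \<in> Acyc E. unique_source V P r}"

text \<open>The vertices clicked most often form a set X whose cut arcs point out of X in P1 and
  into X in P2. So X contains a source of P1 and, unless X = V, its complement contains a source
  of P2; but r is the only source of both.\<close>
lemma click_counter_constant:
  assumes sg: "simple_graph V E" and P1: "P1 \<in> Acyc E" and P2: "P2 \<in> Acyc E"
    and cc: "click_counter P1 P2 c" and u1: "unique_source V P1 r" and u2: "unique_source V P2 r"
  shows "\<forall>x\<in>V. c x = Max (c ` V)"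
proof (rule ccontr)
  have fin: "finite V" using simple_graph_finite[OF sg] .
  have o1: "is_orientation E P1" and o2: "is_orientation E P2"
    using AcycD[OF P1] AcycD[OF P2] by blast+
  define X where "X = {x \<in> V. c x = Max (c ` V)}"
  have le: "c x \<le> Max (c ` V)" if "x \<in> V" for x using fin that by simp
  have cross: "(x, y) \<in> P1 \<and> (y, x) \<in> P2"
    if "x \<in> X" "y \<in> V - X" "{x, y} \<in> E" for x y
  proof -
    have "(y, x) \<notin> P1" using cc le[of y] that unfolding click_counter_def X_def by force
    then have "(x, y) \<in> P1" using orientation_edge_iff[OF o1 that(3)] by blast
    then show ?thesis using cc that unfolding click_counter_def X_def by force
  qed
  assume "\<not> (\<forall>x\<in>V. c x = Max (c ` V))"
  then have "V - X \<noteq> {}" unfolding X_def by blast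
  have "Max (c ` V) \<in> c ` V" using fin u1 unfolding unique_source_def by (intro Max_in) auto
  then have "X \<noteq> {}" unfolding X_def by force
  then have "\<exists>s\<in>X. is_source P1 s"
  proof (rule acyclic_has_source_in[rotated])
    show "finite X" using fin unfolding X_def by simp
    show "acyclic P1" using AcycD[OF P1] by blast
    show "\<forall>a b. (a, b) \<in> P1 \<longrightarrow> b \<in> X \<longrightarrow> a \<in> X"
      using cross Acyc_arcD[OF sg P1] orientation_arc_edge[OF o1] orientation_edge_iff[OF o1]
      by (metis Diff_iff insert_commute)
  qed
  moreover have "\<exists>s\<in>V - X. is_source P2 s"
  proof (rule acyclic_has_source_in)
    show "finite (V - X)" using fin by simp
    show "acyclic P2" using AcycD[OF P2] by blast
    show "\<forall>a b. (a, b) \<in> P2 \<longrightarrow> b \<in> V - X \<longrightarrow> a \<in> V - X"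
      using cross Acyc_arcD[OF sg P2] orientation_arc_edge[OF o2] orientation_edge_iff[OF o2]
      by (metis Diff_iff)
  qed (fact \<open>V - X \<noteq> {}\<close>)
  ultimately show False
    using u1 u2 unfolding unique_source_def X_def by blast
qed

lemma unique_source_eq_if_click_counter:
  assumes sg: "simple_graph V E" and P1: "P1 \<in> Acyc E" and P2: "P2 \<in> Acyc E"
    and cc: "click_counter P1 P2 c" and "unique_source V P1 r" "unique_source V P2 r"
  shows "P1 = P2"
proof (rule orientation_eq_if_subset)
  show "is_orientation E P1" "is_orientation E P2" using AcycD[OF P1] AcycD[OF P2] by blast+
  have "c a = c b" if "(a, b) \<in> P1" for a b
    using click_counter_constant[OF assms] Acyc_arcD[OF sg P1 that] by simp
  then show "P1 \<subseteq> P2" using cc unfolding click_counter_def by fastforce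
qed

lemma kappa_rel_unique_source_eq:
  assumes sg: "simple_graph V E" and "(P1, P2) \<in> kappa_rel V E"
    and "unique_source V P1 r" "unique_source V P2 r"
  shows "P1 = P2"
proof -
  have "(P1, P2) \<in> (clicks_in V E)\<^sup>*" "P1 \<in> Acyc E" "P2 \<in> Acyc E"
    using assms(2) unfolding kappa_rel_def click_rel_eq_clicks_in by auto
  with clicks_in_click_counter show ?thesis
    using unique_source_eq_if_click_counter[OF sg] assms(3,4) by meson
qed

text \<open>Clicking sources other than r terminates, because no vertex can be clicked more often
  than its distance to r; when it stops, r is the only source.\<close>
lemma clicks_to_unique_source:
  assumes sg: "simple_graph V E" and cg: "connected_graph V E" and r: "r \<in> V" and Q: "Q \<in> Acyc E"
  shows "\<exists>P. (Q, P) \<in> (clicks_in (V - {r}) E)\<^sup>* \<and> unique_source V P r"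
proof -
  have "\<forall>x\<in>V. \<exists>k. (r, x) \<in> adj E ^^ k"
    using cg r unfolding connected_graph_def by (blast intro: rtrancl_imp_relpow)
  then obtain d where d: "\<forall>x\<in>V. (r, x) \<in> adj E ^^ d x" by metis
  have fin: "finite V" using simple_graph_finite[OF sg] .
  have "\<exists>P'. (Q, P') \<in> (clicks_in (V - {r}) E)\<^sup>* \<and> unique_source V P' r"
    if "(Q, P) \<in> (clicks_in (V - {r}) E)\<^sup>*" "click_counter Q P c" "c r = 0" for P c
    using that
  proof (induction "\<Sum>x\<in>V. d x - c x" arbitrary: P c rule: less_induct)
    case less
    have P: "P \<in> Acyc E" using clicks_in_Acyc[OF sg less.prems(1) Q] .
    show ?case
    proof (cases "\<exists>x\<in>V - {r}. is_source P x")
      case True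
      then obtain x where x: "x \<in> V - {r}" "is_source P x" by blast
      define c' where "c' = c(x := Suc (c x))"
      have path: "(Q, click P x) \<in> (clicks_in (V - {r}) E)\<^sup>*"
        using less.prems(1) P x unfolding clicks_in_def by (auto intro: rtrancl_into_rtrancl)
      have cc: "click_counter Q (click P x) c'"
        unfolding c'_def by (rule click_counter_click[OF less.prems(2) P x(2)])
      have c'r: "c' r = 0" using less.prems(3) x(1) unfolding c'_def by auto
      have "c' x \<le> d x"
        using click_counter_le_walk_length[OF _ cc c'r] AcycD[OF Q] d x(1) by blast
      then have "(\<Sum>y\<in>V. d y - c' y) < (\<Sum>y\<in>V. d y - c y)"
        using fin x(1) unfolding c'_def by (intro sum_strict_mono_ex1) auto
      then show ?thesis using less.hyps path cc c'r by blast
    next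
      case False
      then have "unique_source V P r"
        using Acyc_has_source[OF sg P] r unfolding unique_source_def by blast
      then show ?thesis using less.prems(1) by blast
    qed
  qed
  moreover have "click_counter Q Q (\<lambda>_. 0)" unfolding click_counter_def by simp
  ultimately show ?thesis by blast
qed

lemma bij_betw_kappa_class:
  assumes sg: "simple_graph V E" and cg: "connected_graph V E" and r: "r \<in> V"
  shows "bij_betw (kappa_class V E) (Acyc_rooted V E r) (kappa_classes V E)"
  unfolding bij_betw_def
proof
  have equiv: "equiv (Acyc E) (kappa_rel V E)" by (rule kappa_equiv[OF sg])
  show "inj_on (kappa_class V E) (Acyc_rooted V E r)"
    using eq_equiv_class_iff[OF equiv] kappa_rel_unique_source_eq[OF sg]
    unfolding kappa_class_def Acyc_rooted_def by (intro inj_onI) blast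
  show "kappa_class V E ` Acyc_rooted V E r = kappa_classes V E"
  proof
    show "kappa_class V E ` Acyc_rooted V E r \<subseteq> kappa_classes V E"
      unfolding kappa_class_def kappa_classes_def Acyc_rooted_def by (auto intro: quotientI)
    show "kappa_classes V E \<subseteq> kappa_class V E ` Acyc_rooted V E r"
    proof
      fix C assume "C \<in> kappa_classes V E"
      then obtain Q where Q: "Q \<in> Acyc E" "C = kappa_rel V E `` {Q}"
        unfolding kappa_classes_def by (blast elim: quotientE)
      obtain P where P: "(Q, P) \<in> (clicks_in (V - {r}) E)\<^sup>*" "unique_source V P r"
        using clicks_to_unique_source[OF sg cg r Q(1)] by blast
      have "(Q, P) \<in> kappa_rel V E" using clicks_in_kappa_rel[OF sg P(1) Q(1)] by blast
      then have "C = kappa_class V E P" "P \<in> Acyc E"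
        using Q(2) equiv_class_eq[OF equiv] unfolding kappa_class_def kappa_rel_def by auto
      then show "C \<in> kappa_class V E ` Acyc_rooted V E r" using P(2) unfolding Acyc_rooted_def by blast
    qed
  qed
qed

section \<open>Orientations induced by permutations\<close>

lemma perm_orient_Nil [simp]: "perm_orient E [] = {}"
  unfolding perm_orient_def by simp

lemma perm_orient_Cons:
  "perm_orient E (x # xs) = {(x, b) | b. {x, b} \<in> E \<and> b \<in> set xs} \<union> perm_orient E xs"
proof (rule set_eqI, clarify)
  fix a b
  have "(\<exists>i j. i < j \<and> j < length (x # xs) \<and> (x # xs) ! i = a \<and> (x # xs) ! j = b) \<longleftrightarrow>
      (a = x \<and> b \<in> set xs) \<or> (\<exists>i j. i < j \<and> j < length xs \<and> xs ! i = a \<and> xs ! j = b)"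
  proof
    assume "\<exists>i j. i < j \<and> j < length (x # xs) \<and> (x # xs) ! i = a \<and> (x # xs) ! j = b"
    then obtain i j where ij: "i < j" "j < length (x # xs)" "(x # xs) ! i = a" "(x # xs) ! j = b"
      by blast
    then obtain j' where "j = Suc j'" by (cases j) auto
    with ij show "(a = x \<and> b \<in> set xs) \<or> (\<exists>i j. i < j \<and> j < length xs \<and> xs ! i = a \<and> xs ! j = b)"
      by (cases i) auto
  next
    assume "(a = x \<and> b \<in> set xs) \<or> (\<exists>i j. i < j \<and> j < length xs \<and> xs ! i = a \<and> xs ! j = b)"
    then show "\<exists>i j. i < j \<and> j < length (x # xs) \<and> (x # xs) ! i = a \<and> (x # xs) ! j = b"
    proof
      assume "a = x \<and> b \<in> set xs"
      then obtain j where "j < length xs" "xs ! j = b" "a = x" by (metis in_set_conv_nth)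
      then show ?thesis by (intro exI[of _ 0] exI[of _ "Suc j"]) simp
    next
      assume "\<exists>i j. i < j \<and> j < length xs \<and> xs ! i = a \<and> xs ! j = b"
      then obtain i j where "i < j" "j < length xs" "xs ! i = a" "xs ! j = b" by blast
      then show ?thesis by (intro exI[of _ "Suc i"] exI[of _ "Suc j"]) simp
    qed
  qed
  then show "(a, b) \<in> perm_orient E (x # xs) \<longleftrightarrow>
      (a, b) \<in> {(x, b) | b. {x, b} \<in> E \<and> b \<in> set xs} \<union> perm_orient E xs"
    unfolding perm_orient_def by auto
qed

lemma perm_orient_subset: "perm_orient E xs \<subseteq> set xs \<times> set xs"
  by (induction xs) (auto simp: perm_orient_Cons)

lemma acyclic_perm_orient: "distinct xs \<Longrightarrow> acyclic (perm_orient E xs)"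
proof (induction xs)
  case Nil
  then show ?case by (simp add: acyclic_def)
next
  case (Cons x xs)
  show ?case
  proof (rule acyclic_by_source[of "perm_orient E xs" x])
    show "acyclic (perm_orient E xs)" using Cons by simp
    show "\<forall>a. (a, x) \<notin> perm_orient E (x # xs)"
      using Cons.prems perm_orient_subset[of E xs] by (auto simp: perm_orient_Cons)
    show "\<forall>a b. (a, b) \<in> perm_orient E (x # xs) \<longrightarrow> a \<noteq> x \<longrightarrow> (a, b) \<in> perm_orient E xs"
      by (auto simp: perm_orient_Cons)
  qed
qed

lemma perm_orient_edge_iff:
  assumes "distinct xs" "{a, b} \<in> E" "a \<noteq> b" "a \<in> set xs" "b \<in> set xs"
  shows "(a, b) \<in> perm_orient E xs \<longleftrightarrow> (b, a) \<notin> perm_orient E xs"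
  using assms
proof (induction xs)
  case (Cons x xs)
  then show ?case
    using perm_orient_subset[of E xs] by (auto simp: perm_orient_Cons insert_commute)
qed simp

lemma perm_orient_Acyc:
  assumes "simple_graph V E" "is_perm V \<pi>"
  shows "perm_orient E \<pi> \<in> Acyc E"
proof (rule AcycI)
  show "acyclic (perm_orient E \<pi>)" using assms(2) acyclic_perm_orient unfolding is_perm_def by blast
  show "is_orientation E (perm_orient E \<pi>)"
    unfolding is_orientation_def
  proof (intro conjI allI impI ballI)
    fix p assume "p \<in> perm_orient E \<pi>"
    then show "case p of (a, b) \<Rightarrow> {a, b} \<in> E" unfolding perm_orient_def by auto
  next
    fix a b assume "{a, b} \<in> E"
    with assms show "(a, b) \<in> perm_orient E \<pi> \<longleftrightarrow> (b, a) \<notin> perm_orient E \<pi>"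
      using perm_orient_edge_iff simple_graph_edgeD unfolding is_perm_def by metis
  qed
qed

lemma perm_orient_eq_if_sorted:
  assumes "is_orientation E P" "distinct xs" "sorted_wrt (\<lambda>a b. (b, a) \<notin> P) xs"
  shows "perm_orient E xs = P \<inter> set xs \<times> set xs"
  using assms(2,3)
proof (induction xs)
  case (Cons x xs)
  have "(x, x) \<notin> P" using orientation_edge_iff[OF assms(1), of x x] orientation_arc_edge[OF assms(1)] by blast
  moreover have "(x, b) \<in> P \<longleftrightarrow> {x, b} \<in> E" if "b \<in> set xs" for b
    using Cons.prems(2) that orientation_arc_edge[OF assms(1), of x b]
      orientation_edge_iff[OF assms(1), of x b] by auto
  ultimately show ?case
    using Cons by (auto simp: perm_orient_Cons)
qed simp

lemma acyclic_sorted_list: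
  assumes "finite S" "acyclic R"
  shows "\<exists>xs. distinct xs \<and> set xs = S \<and> sorted_wrt (\<lambda>a b. (b, a) \<notin> R) xs"
  using assms(1)
proof (induction "card S" arbitrary: S)
  case 0
  then show ?case by (intro exI[of _ "[]"]) simp
next
  case (Suc n)
  then obtain m where m: "m \<in> S" "\<forall>y\<in>S. (y, m) \<notin> R"
    using acyclic_has_minimal[OF Suc.prems assms(2)] by fastforce
  obtain xs where "distinct xs" "set xs = S - {m}" "sorted_wrt (\<lambda>a b. (b, a) \<notin> R) xs"
    using Suc.hyps Suc.prems m(1) by (metis card_Diff_singleton diff_Suc_1 finite_Diff)
  then show ?case using m by (intro exI[of _ "m # xs"]) auto
qed

section \<open>Deleting and contracting a cycle-edge\<close>

locale cycle_edge_graph =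
  fixes V :: "'a set" and E :: "'a set set" and v w :: 'a
  assumes simple: "simple_graph V E" and connected: "connected_graph V E"
    and cycle: "cycle_edge E {v, w}"
begin

lemma edge_vw: "{v, w} \<in> E"
  using cycle unfolding cycle_edge_def by blast

lemma v_neq_w: "v \<noteq> w" and v_in_V: "v \<in> V" and w_in_V: "w \<in> V"
  using simple_graph_edgeD[OF simple edge_vw] by auto

lemma simple_deleted: "simple_graph V (E - {{v, w}})"
  by (rule simple_graph_subset[OF simple]) blast

lemma connected_deleted: "connected_graph V (E - {{v, w}})"
proof -
  have "(v, w) \<in> (adj (E - {{v, w}}))\<^sup>*" "(w, v) \<in> (adj (E - {{v, w}}))\<^sup>*"
    using cycle unfolding cycle_edge_def by (metis insert_commute)+
  then have "adj E \<subseteq> (adj (E - {{v, w}}))\<^sup>*"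
    unfolding adj_def by (auto simp: doubleton_eq_iff)
  then have "(adj E)\<^sup>* \<subseteq> (adj (E - {{v, w}}))\<^sup>*" by (rule rtrancl_subset_rtrancl)
  then show ?thesis using connected unfolding connected_graph_def by blast
qed

lemma contract_edges_memI:
  "{a, b} \<in> E \<Longrightarrow> {a, b} \<noteq> {v, w} \<Longrightarrow> {cmap v w a, cmap v w b} \<in> contract_edges E v w"
  unfolding contract_edges_def by force

lemma contract_edges_memE:
  assumes "g \<in> contract_edges E v w"
  obtains a b where "{a, b} \<in> E" "{a, b} \<noteq> {v, w}" "g = {cmap v w a, cmap v w b}"
proof -
  from assms obtain f where f: "f \<in> E" "f \<noteq> {v, w}" "g = cmap v w ` f"
    unfolding contract_edges_def by blast
  then obtain a b where "f = {a, b}" using simple unfolding simple_graph_def by blast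
  then show ?thesis using that f by simp
qed

lemma simple_contracted: "simple_graph (contract_vertices V v w) (contract_edges E v w)"
  unfolding simple_graph_def contract_vertices_def
proof (intro conjI ballI)
  show "finite (V - {w})" using simple_graph_finite[OF simple] by simp
  fix g assume "g \<in> contract_edges E v w"
  then obtain a b where ab: "{a, b} \<in> E" "{a, b} \<noteq> {v, w}" "g = {cmap v w a, cmap v w b}"
    by (rule contract_edges_memE)
  have "a \<noteq> b" "a \<in> V" "b \<in> V" using simple_graph_edgeD[OF simple ab(1)] by auto
  then show "\<exists>a b. g = {a, b} \<and> a \<noteq> b \<and> a \<in> V - {w} \<and> b \<in> V - {w}"
    using ab(2,3) v_neq_w v_in_V unfolding cmap_def by (auto simp: doubleton_eq_iff)
qed

lemma connected_contracted: "connected_graph (contract_vertices V v w) (contract_edges E v w)"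
  unfolding connected_graph_def contract_vertices_def
proof (intro conjI ballI)
  show "V - {w} \<noteq> {}" using v_in_V v_neq_w by blast
  have walk: "(cmap v w a, cmap v w b) \<in> (adj (contract_edges E v w))\<^sup>*" if "(a, b) \<in> (adj E)\<^sup>*" for a b
    using that
  proof (induction rule: rtrancl_induct)
    case (step y z)
    have e: "{y, z} \<in> E" using step.hyps(2) unfolding adj_def by simp
    show ?case
    proof (cases "{y, z} = {v, w}")
      case True
      then have "cmap v w y = cmap v w z" unfolding cmap_def by (auto simp: doubleton_eq_iff)
      then show ?thesis using step.IH by simp
    next
      case False
      then have "(cmap v w y, cmap v w z) \<in> adj (contract_edges E v w)"
        using contract_edges_memI[OF e False] unfolding adj_def by simp
      with step.IH show ?thesis by (rule rtrancl_into_rtrancl)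
    qed
  qed simp
  fix a b assume "a \<in> V - {w}" "b \<in> V - {w}"
  then show "(a, b) \<in> (adj (contract_edges E v w))\<^sup>*"
    using walk[of a b] connected unfolding connected_graph_def cmap_def by auto
qed

lemma delete_orient_Acyc:
  assumes P: "P \<in> Acyc E"
  shows "delete_orient v w P \<in> Acyc (E - {{v, w}})"
proof (rule AcycI)
  have o: "is_orientation E P" using AcycD[OF P] by blast
  show "acyclic (delete_orient v w P)"
    using AcycD[OF P] acyclic_subset[of P] unfolding delete_orient_def by blast
  show "is_orientation (E - {{v, w}}) (delete_orient v w P)" unfolding is_orientation_def
  proof (intro conjI allI impI ballI)
    fix p assume p: "p \<in> delete_orient v w P"
    then obtain a b where "p = (a, b)" "(a, b) \<in> P" "(a, b) \<noteq> (v, w)" "(a, b) \<noteq> (w, v)"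
      unfolding delete_orient_def by (cases p) auto
    then show "case p of (a, b) \<Rightarrow> {a, b} \<in> E - {{v, w}}"
      using orientation_arc_edge[OF o] by (auto simp: doubleton_eq_iff)
  next
    fix a b assume e: "{a, b} \<in> E - {{v, w}}"
    then have "(a, b) \<notin> {(v, w), (w, v)}" "(b, a) \<notin> {(v, w), (w, v)}"
      by (auto simp: insert_commute)
    then show "(a, b) \<in> delete_orient v w P \<longleftrightarrow> (b, a) \<notin> delete_orient v w P"
      using orientation_edge_iff[OF o] e unfolding delete_orient_def by blast
  qed
qed

lemma delete_orient_kappa_rel:
  assumes "(P, Q) \<in> kappa_rel V E"
  shows "(delete_orient v w P, delete_orient v w Q) \<in> kappa_rel V (E - {{v, w}})"
proof -
  have path: "(P, Q) \<in> (click_rel V E)\<^sup>*" and "P \<in> Acyc E" "Q \<in> Acyc E"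
    using assms unfolding kappa_rel_def by auto
  have "(delete_orient v w P, delete_orient v w Q) \<in> (click_rel V (E - {{v, w}}))\<^sup>*"
    using path
  proof (induction rule: rtrancl_induct)
    case (step P' P'')
    from step.hyps(2) obtain x where x: "P' \<in> Acyc E" "x \<in> V" "is_source P' x" "P'' = click P' x"
      unfolding click_rel_def by blast
    have "delete_orient v w (click P' x) = click (delete_orient v w P') x"
      unfolding delete_orient_def click_def by auto
    moreover have "is_source (delete_orient v w P') x"
      using x(3) unfolding is_source_def delete_orient_def by blast
    ultimately have "(delete_orient v w P', delete_orient v w P'') \<in> click_rel V (E - {{v, w}})"
      unfolding click_rel_def using x delete_orient_Acyc[OF x(1)] by auto
    with step.IH show ?case by (rule rtrancl_into_rtrancl)
  qed simp
  then show ?thesis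
    unfolding kappa_rel_def using delete_orient_Acyc \<open>P \<in> Acyc E\<close> \<open>Q \<in> Acyc E\<close> by blast
qed

text \<open>The first case in the definition of Theta: by vw_first_iff_perm_orient, these are
  the orientations O^\<pi> with \<pi> starting with v, w.\<close>
definition vw_first :: "('a \<times> 'a) set \<Rightarrow> bool" where
  "vw_first P \<longleftrightarrow> is_source P v \<and> (\<forall>a. (a, w) \<in> P \<longrightarrow> a = v)"

lemma source_v_arc_vw:
  assumes "P \<in> Acyc E" "is_source P v"
  shows "(v, w) \<in> P" "(w, v) \<notin> P"
  using assms orientation_edge_iff[OF _ edge_vw] AcycD unfolding is_source_def by blast+

lemma insert_delete_orient:
  "P \<in> Acyc E \<Longrightarrow> is_source P v \<Longrightarrow> insert (v, w) (delete_orient v w P) = P"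
  using source_v_arc_vw unfolding delete_orient_def by blast

lemma unique_source_delete_orient:
  assumes u: "unique_source V P v" and "\<not> vw_first P"
  shows "unique_source V (delete_orient v w P) v"
  unfolding unique_source_def
proof (intro conjI ballI impI)
  show "v \<in> V" by (rule v_in_V)
  have sv: "is_source P v" using u unfolding unique_source_def by blast
  then show "is_source (delete_orient v w P) v" unfolding is_source_def delete_orient_def by blast
  fix x assume x: "x \<in> V" "is_source (delete_orient v w P) x"
  show "x = v"
  proof (rule ccontr)
    assume "x \<noteq> v"
    moreover obtain a where "(a, w) \<in> P" "a \<noteq> v" using \<open>\<not> vw_first P\<close> sv unfolding vw_first_def by blast
    moreover obtain b where "(b, x) \<in> P" if "x \<noteq> w"
      using u x(1) \<open>x \<noteq> v\<close> unfolding unique_source_def is_source_def by blast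
    ultimately show False
      using x(2) v_neq_w unfolding is_source_def delete_orient_def by (cases "x = w") auto
  qed
qed

lemma delete_orient_insert:
  "Q \<in> Acyc (E - {{v, w}}) \<Longrightarrow> delete_orient v w (insert (v, w) Q) = Q"
  using orientation_arc_edge AcycD unfolding delete_orient_def by (fastforce simp: insert_commute)

lemma insert_vw_Acyc:
  assumes Q: "Q \<in> Acyc (E - {{v, w}})" and sv: "is_source Q v"
  shows "insert (v, w) Q \<in> Acyc E"
proof (rule AcycI)
  have o: "is_orientation (E - {{v, w}}) Q" using AcycD[OF Q] by blast
  have nvw: "(v, w) \<notin> Q" "(w, v) \<notin> Q"
    using orientation_arc_edge[OF o, of v w] orientation_arc_edge[OF o, of w v] by (auto simp: insert_commute)
  have "(w, v) \<notin> Q\<^sup>*" using sv v_neq_w unfolding is_source_def by (auto elim: rtranclE)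
  then show "acyclic (insert (v, w) Q)" using AcycD[OF Q] by simp
  show "is_orientation E (insert (v, w) Q)" unfolding is_orientation_def
  proof (intro conjI allI impI ballI)
    fix p assume "p \<in> insert (v, w) Q"
    then show "case p of (a, b) \<Rightarrow> {a, b} \<in> E"
      using edge_vw orientation_arc_edge[OF o] by auto
  next
    fix a b assume e: "{a, b} \<in> E"
    show "(a, b) \<in> insert (v, w) Q \<longleftrightarrow> (b, a) \<notin> insert (v, w) Q"
    proof (cases "{a, b} = {v, w}")
      case True
      then show ?thesis using nvw v_neq_w by (auto simp: doubleton_eq_iff)
    next
      case False
      then have "(a, b) \<noteq> (v, w)" "(b, a) \<noteq> (v, w)" by (auto simp: insert_commute)
      moreover have "(a, b) \<in> Q \<longleftrightarrow> (b, a) \<notin> Q" using orientation_edge_iff[OF o] e False by blast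
      ultimately show ?thesis by auto
    qed
  qed
qed

lemma unique_source_insert_vw:
  assumes Q: "Q \<in> Acyc (E - {{v, w}})" and u: "unique_source V Q v"
  shows "unique_source V (insert (v, w) Q) v" "\<not> vw_first (insert (v, w) Q)"
proof -
  have "(v, w) \<notin> Q"
    using orientation_arc_edge[of "E - {{v, w}}" Q v w] AcycD[OF Q] by blast
  moreover obtain a where "(a, w) \<in> Q"
    using u w_in_V v_neq_w unfolding unique_source_def is_source_def by blast
  ultimately show "\<not> vw_first (insert (v, w) Q)" unfolding vw_first_def by blast
  show "unique_source V (insert (v, w) Q) v"
    using u v_neq_w unfolding unique_source_def is_source_def by auto
qed

lemma contract_orient_iff:
  assumes P: "P \<in> Acyc E" and vw: "vw_first P"
  shows "(c, d) \<in> contract_orient v w P \<longleftrightarrow>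
    c \<noteq> w \<and> d \<noteq> v \<and> d \<noteq> w \<and> (if c = v then (v, d) \<in> P \<or> (w, d) \<in> P else (c, d) \<in> P)"
proof
  assume "(c, d) \<in> contract_orient v w P"
  then obtain a b where ab: "(a, b) \<in> P" "{a, b} \<noteq> {v, w}" "c = cmap v w a" "d = cmap v w b"
    unfolding contract_orient_def by blast
  moreover have "b \<noteq> v" "b \<noteq> w" using vw ab(1,2) unfolding vw_first_def is_source_def by auto
  ultimately show "c \<noteq> w \<and> d \<noteq> v \<and> d \<noteq> w \<and> (if c = v then (v, d) \<in> P \<or> (w, d) \<in> P else (c, d) \<in> P)"
    using v_neq_w unfolding cmap_def by (auto split: if_splits)
next
  assume cd: "c \<noteq> w \<and> d \<noteq> v \<and> d \<noteq> w \<and> (if c = v then (v, d) \<in> P \<or> (w, d) \<in> P else (c, d) \<in> P)"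
  have arc: "(cmap v w a, d) \<in> contract_orient v w P" if "(a, d) \<in> P" for a
  proof -
    have "a \<noteq> d" using that acyclic_no_loop[of P d] AcycD[OF P] by auto
    then show ?thesis using that cd unfolding contract_orient_def cmap_def by (auto simp: doubleton_eq_iff)
  qed
  show "(c, d) \<in> contract_orient v w P"
  proof (cases "c = v")
    case True
    then show ?thesis using cd arc[of v] arc[of w] v_neq_w unfolding cmap_def by auto
  next
    case False
    then show ?thesis using cd arc[of c] unfolding cmap_def by auto
  qed
qed

lemma contract_orient_Acyc:
  assumes P: "P \<in> Acyc E" and vw: "vw_first P"
  shows "contract_orient v w P \<in> Acyc (contract_edges E v w)"
proof (rule AcycI)
  have o: "is_orientation E P" using AcycD[OF P] by blast
  note iff = contract_orient_iff[OF P vw]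
  show "acyclic (contract_orient v w P)"
  proof (rule acyclic_by_source[of P v])
    show "acyclic P" using AcycD[OF P] by blast
    show "\<forall>a. (a, v) \<notin> contract_orient v w P" using iff by blast
    show "\<forall>a b. (a, b) \<in> contract_orient v w P \<longrightarrow> a \<noteq> v \<longrightarrow> (a, b) \<in> P" using iff by presburger
  qed
  show "is_orientation (contract_edges E v w) (contract_orient v w P)" unfolding is_orientation_def
  proof (intro conjI allI impI ballI)
    fix p assume "p \<in> contract_orient v w P"
    then obtain a b where "(a, b) \<in> P" "{a, b} \<noteq> {v, w}" "p = (cmap v w a, cmap v w b)"
      unfolding contract_orient_def by blast
    then show "case p of (c, d) \<Rightarrow> {c, d} \<in> contract_edges E v w"
      using contract_edges_memI orientation_arc_edge[OF o] by simp
  next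
    fix c d assume "{c, d} \<in> contract_edges E v w"
    then obtain a b where ab: "{a, b} \<in> E" "{a, b} \<noteq> {v, w}" "{c, d} = {cmap v w a, cmap v w b}"
      by (rule contract_edges_memE)
    have "(a, b) \<in> P \<or> (b, a) \<in> P" using orientation_edge_iff[OF o ab(1)] by blast
    then have "(c, d) \<in> contract_orient v w P \<or> (d, c) \<in> contract_orient v w P"
      using ab(2,3) unfolding contract_orient_def by (auto simp: doubleton_eq_iff insert_commute)
    moreover have "\<not> ((c, d) \<in> contract_orient v w P \<and> (d, c) \<in> contract_orient v w P)"
      using iff[of c d] iff[of d c] orientation_arc_edge[OF o] orientation_edge_iff[OF o] by auto
    ultimately show "(c, d) \<in> contract_orient v w P \<longleftrightarrow> (d, c) \<notin> contract_orient v w P"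
      by blast
  qed
qed

lemma unique_source_contract_orient_iff:
  assumes P: "P \<in> Acyc E" and vw: "vw_first P"
  shows "unique_source (contract_vertices V v w) (contract_orient v w P) v \<longleftrightarrow> unique_source V P v"
proof -
  have "is_source (contract_orient v w P) x \<longleftrightarrow> is_source P x" if x: "x \<in> V - {v, w}" for x
  proof -
    have "(\<exists>y. (y, x) \<in> contract_orient v w P) \<longleftrightarrow> (\<exists>y. (y, x) \<in> P)"
    proof
      assume "\<exists>y. (y, x) \<in> contract_orient v w P"
      then obtain y where "(y, x) \<in> contract_orient v w P" by blast
      then show "\<exists>y. (y, x) \<in> P" using contract_orient_iff[OF P vw] by (cases "y = v") auto
    next
      assume "\<exists>y. (y, x) \<in> P"
      then obtain y where y: "(y, x) \<in> P" by blast
      then have "(if y = w then v else y, x) \<in> contract_orient v w P"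
        using x vw v_neq_w contract_orient_iff[OF P vw] unfolding vw_first_def is_source_def by auto
      then show "\<exists>y. (y, x) \<in> contract_orient v w P" by blast
    qed
    then show ?thesis unfolding is_source_def by blast
  qed
  moreover have "is_source P v" using vw unfolding vw_first_def by blast
  moreover have "is_source (contract_orient v w P) v"
    using contract_orient_iff[OF P vw] unfolding is_source_def by blast
  moreover have "\<not> is_source P w"
    using source_v_arc_vw(1)[OF P \<open>is_source P v\<close>] unfolding is_source_def by blast
  ultimately show ?thesis
    using v_in_V unfolding unique_source_def contract_vertices_def by blast
qed

lemma contract_orient_click:
  assumes P: "P \<in> Acyc E" and vw: "vw_first P" and x: "x \<in> V" "x \<noteq> v" "is_source P x"
  shows "x \<noteq> w" "vw_first (click P x)" "is_source (contract_orient v w P) x"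
    "contract_orient v w (click P x) = click (contract_orient v w P) x"
proof -
  have sv: "is_source P v" using vw unfolding vw_first_def by blast
  show xw: "x \<noteq> w" using source_v_arc_vw(1)[OF P sv] x(3) unfolding is_source_def by blast
  have no_vx: "(v, x) \<notin> P" "(w, x) \<notin> P" "(x, v) \<notin> P" "(x, w) \<notin> P"
    using x vw unfolding vw_first_def is_source_def by auto
  show vw': "vw_first (click P x)"
    using vw no_vx x(2) xw unfolding vw_first_def is_source_def click_def by auto
  have P': "click P x \<in> Acyc E" using click_Acyc[OF simple P x(3)] .
  note iff = contract_orient_iff[OF P vw] and iff' = contract_orient_iff[OF P' vw']
  show "is_source (contract_orient v w P) x"
    using iff x(3) no_vx unfolding is_source_def by auto
  show "contract_orient v w (click P x) = click (contract_orient v w P) x"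
  proof (rule set_eqI, clarify)
    fix c d
    show "(c, d) \<in> contract_orient v w (click P x) \<longleftrightarrow> (c, d) \<in> click (contract_orient v w P) x"
      using iff'[of c d] iff[of c d] iff[of d c] no_vx x(2) xw by (auto simp: click_iff)
  qed
qed

lemma contract_orient_clicks_avoiding_v:
  assumes "(P, Q) \<in> (clicks_in (V - {v}) E)\<^sup>*" "P \<in> Acyc E" "vw_first P"
  shows "vw_first Q \<and>
    (contract_orient v w P, contract_orient v w Q) \<in> (click_rel (contract_vertices V v w) (contract_edges E v w))\<^sup>*"
  using assms(1)
proof (induction rule: rtrancl_induct)
  case (step Q Q')
  from step.hyps(2) obtain x where x: "Q \<in> Acyc E" "x \<in> V - {v}" "is_source Q x" "Q' = click Q x"
    unfolding clicks_in_def by blast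
  have vw: "vw_first Q" using step.IH by blast
  note cl = contract_orient_click[OF x(1) vw _ _ x(3)]
  have "(contract_orient v w Q, contract_orient v w Q') \<in> click_rel (contract_vertices V v w) (contract_edges E v w)"
    unfolding click_rel_def contract_vertices_def using cl x contract_orient_Acyc[OF x(1) vw] by auto
  then show ?case using step.IH cl x by (auto intro: rtrancl_into_rtrancl)
qed (use assms(3) in simp)

text \<open>The inverse of contraction on orientations in which v is a source: e is oriented
  from v to w, every other edge inherits the direction of its image.\<close>
definition expand_orient :: "('a \<times> 'a) set \<Rightarrow> ('a \<times> 'a) set" where
  "expand_orient R = insert (v, w)
     {(a, b). {a, b} \<in> E \<and> {a, b} \<noteq> {v, w} \<and> (cmap v w a, cmap v w b) \<in> R}"

lemma vw_first_expand_orient: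
  assumes "is_source R v"
  shows "vw_first (expand_orient R)"
  using assms v_neq_w unfolding vw_first_def is_source_def expand_orient_def cmap_def
  by (auto split: if_splits)

lemma expand_orient_Acyc:
  assumes R: "R \<in> Acyc (contract_edges E v w)" and sv: "is_source R v"
  shows "expand_orient R \<in> Acyc E"
proof (rule AcycI)
  have o: "is_orientation (contract_edges E v w) R" using AcycD[OF R] by blast
  show "acyclic (expand_orient R)"
  proof (rule acyclic_by_source[of "inv_image R (cmap v w)" v])
    show "acyclic (inv_image R (cmap v w))" using AcycD[OF R] acyclic_inv_image by blast
    show "\<forall>a. (a, v) \<notin> expand_orient R"
      using vw_first_expand_orient[OF sv] unfolding vw_first_def is_source_def by blast
    show "\<forall>a b. (a, b) \<in> expand_orient R \<longrightarrow> a \<noteq> v \<longrightarrow> (a, b) \<in> inv_image R (cmap v w)"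
      unfolding expand_orient_def by auto
  qed
  show "is_orientation E (expand_orient R)" unfolding is_orientation_def
  proof (intro conjI allI impI ballI)
    fix p assume "p \<in> expand_orient R"
    then show "case p of (a, b) \<Rightarrow> {a, b} \<in> E" using edge_vw unfolding expand_orient_def by auto
  next
    fix a b assume e: "{a, b} \<in> E"
    show "(a, b) \<in> expand_orient R \<longleftrightarrow> (b, a) \<notin> expand_orient R"
    proof (cases "{a, b} = {v, w}")
      case True
      then show ?thesis using v_neq_w unfolding expand_orient_def by (auto simp: doubleton_eq_iff)
    next
      case False
      then have "(a, b) \<noteq> (v, w)" "(b, a) \<noteq> (v, w)" "{b, a} \<in> E" "{b, a} \<noteq> {v, w}"
        using e by (auto simp: insert_commute)
      moreover have "(cmap v w a, cmap v w b) \<in> R \<longleftrightarrow> (cmap v w b, cmap v w a) \<notin> R"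
        using orientation_edge_iff[OF o contract_edges_memI[OF e False]] .
      ultimately show ?thesis using e False unfolding expand_orient_def by auto
    qed
  qed
qed

lemma contract_expand_orient:
  assumes R: "R \<in> Acyc (contract_edges E v w)"
  shows "contract_orient v w (expand_orient R) = R"
proof (rule set_eqI, clarify)
  fix c d
  have o: "is_orientation (contract_edges E v w) R" using AcycD[OF R] by blast
  show "(c, d) \<in> contract_orient v w (expand_orient R) \<longleftrightarrow> (c, d) \<in> R"
  proof
    assume "(c, d) \<in> contract_orient v w (expand_orient R)"
    then show "(c, d) \<in> R" unfolding contract_orient_def expand_orient_def by auto
  next
    assume cd: "(c, d) \<in> R"
    obtain a b where ab: "{a, b} \<in> E" "{a, b} \<noteq> {v, w}" "{c, d} = {cmap v w a, cmap v w b}"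
      using contract_edges_memE[OF orientation_arc_edge[OF o cd]] by blast
    then have "(c = cmap v w a \<and> d = cmap v w b) \<or> (c = cmap v w b \<and> d = cmap v w a)"
      by (simp add: doubleton_eq_iff)
    moreover have mem: "(cmap v w x, cmap v w y) \<in> contract_orient v w (expand_orient R)"
      if "{x, y} = {a, b}" "(cmap v w x, cmap v w y) \<in> R" for x y
    proof -
      have "(x, y) \<in> expand_orient R" "{x, y} \<noteq> {v, w}"
        using that ab(1,2) unfolding expand_orient_def by auto
      then show ?thesis unfolding contract_orient_def by blast
    qed
    ultimately show "(c, d) \<in> contract_orient v w (expand_orient R)"
      using cd mem[of a b] mem[of b a] by (auto simp: insert_commute)
  qed
qed

lemma expand_contract_orient:
  assumes P: "P \<in> Acyc E" and vw: "vw_first P"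
  shows "expand_orient (contract_orient v w P) = P"
proof (rule orientation_eq_if_subset[symmetric])
  show "is_orientation E P" using AcycD[OF P] by blast
  have "is_source (contract_orient v w P) v"
    using contract_orient_iff[OF P vw] unfolding is_source_def by blast
  then show "is_orientation E (expand_orient (contract_orient v w P))"
    using expand_orient_Acyc contract_orient_Acyc[OF P vw] AcycD by blast
  have "(w, v) \<notin> P" using vw unfolding vw_first_def is_source_def by blast
  then show "P \<subseteq> expand_orient (contract_orient v w P)"
    using orientation_arc_edge[OF \<open>is_orientation E P\<close>]
    unfolding expand_orient_def contract_orient_def by (force simp: doubleton_eq_iff)
qed

lemma vw_first_iff_perm_orient:
  assumes P: "P \<in> Acyc E"
  shows "vw_first P \<longleftrightarrow> (\<exists>\<pi>. starts_vw V v w \<pi> \<and> perm_orient E \<pi> = P)"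
proof
  assume vw: "vw_first P"
  have "finite (V - {v, w})" using simple_graph_finite[OF simple] by simp
  then obtain xs where xs: "distinct xs" "set xs = V - {v, w}" "sorted_wrt (\<lambda>a b. (b, a) \<notin> P) xs"
    using acyclic_sorted_list AcycD[OF P] by blast
  have "sorted_wrt (\<lambda>a b. (b, a) \<notin> P) (v # w # xs)"
    using xs(2,3) vw unfolding vw_first_def is_source_def by auto
  moreover have "distinct (v # w # xs)" "set (v # w # xs) = V"
    using xs v_neq_w v_in_V w_in_V by auto
  ultimately have "perm_orient E (v # w # xs) = P \<inter> V \<times> V"
    using perm_orient_eq_if_sorted AcycD[OF P] by metis
  also have "\<dots> = P" using Acyc_arcD[OF simple P] by auto
  finally show "\<exists>\<pi>. starts_vw V v w \<pi> \<and> perm_orient E \<pi> = P"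
    using \<open>distinct (v # w # xs)\<close> \<open>set (v # w # xs) = V\<close> unfolding starts_vw_def is_perm_def by blast
next
  assume "\<exists>\<pi>. starts_vw V v w \<pi> \<and> perm_orient E \<pi> = P"
  then obtain xs where "distinct (v # w # xs)" "perm_orient E (v # w # xs) = P"
    unfolding starts_vw_def is_perm_def by blast
  then show "vw_first P"
    using perm_orient_subset[of E xs] unfolding vw_first_def is_source_def
    by (auto simp: perm_orient_Cons)
qed

section \<open>The map Theta on representatives\<close>

text \<open>The representative of the class of Q is reached from Q by clicks at vertices other than
  v, which preserve vw_first and commute with contraction.\<close>
lemma kappa_rel_vw_first:
  assumes Q: "Q \<in> Acyc E" "vw_first Q" and QP: "(Q, P) \<in> kappa_rel V E"
    and u: "unique_source V P v"
  shows "vw_first P \<and>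
    (contract_orient v w Q, contract_orient v w P) \<in> kappa_rel (contract_vertices V v w) (contract_edges E v w)"
proof -
  obtain P' where P': "(Q, P') \<in> (clicks_in (V - {v}) E)\<^sup>*" "unique_source V P' v"
    using clicks_to_unique_source[OF simple connected v_in_V Q(1)] by blast
  have "(Q, P') \<in> kappa_rel V E" using clicks_in_kappa_rel[OF simple P'(1) Q(1)] by blast
  then have "(P, P') \<in> kappa_rel V E"
    using QP kappa_equiv[OF simple] unfolding equiv_def sym_def trans_def by blast
  then have "P = P'" using kappa_rel_unique_source_eq[OF simple _ u P'(2)] by blast
  moreover note contract_orient_clicks_avoiding_v[OF P'(1) Q]
  moreover have "P' \<in> Acyc E" using clicks_in_Acyc[OF simple P'(1) Q(1)] .
  ultimately show ?thesis
    unfolding kappa_rel_def using contract_orient_Acyc Q by auto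
qed

lemma perm_orient_in_kappa_class_iff:
  assumes P: "P \<in> Acyc_rooted V E v"
  shows "(\<exists>\<pi>. starts_vw V v w \<pi> \<and> perm_orient E \<pi> \<in> kappa_class V E P) \<longleftrightarrow> vw_first P"
proof
  assume "\<exists>\<pi>. starts_vw V v w \<pi> \<and> perm_orient E \<pi> \<in> kappa_class V E P"
  then obtain \<pi> where \<pi>: "starts_vw V v w \<pi>" "(P, perm_orient E \<pi>) \<in> kappa_rel V E"
    unfolding kappa_class_def by blast
  have "perm_orient E \<pi> \<in> Acyc E" "vw_first (perm_orient E \<pi>)"
    using perm_orient_Acyc[OF simple] vw_first_iff_perm_orient \<pi>(1) unfolding starts_vw_def by blast+
  moreover have "(perm_orient E \<pi>, P) \<in> kappa_rel V E"
    using \<pi>(2) kappa_equiv[OF simple] unfolding equiv_def sym_def by blast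
  ultimately show "vw_first P" using kappa_rel_vw_first P unfolding Acyc_rooted_def by blast
next
  assume "vw_first P"
  then obtain \<pi> where "starts_vw V v w \<pi>" "perm_orient E \<pi> = P"
    using vw_first_iff_perm_orient P unfolding Acyc_rooted_def by blast
  moreover have "P \<in> kappa_class V E P"
    using equiv_class_self[OF kappa_equiv[OF simple]] P unfolding kappa_class_def Acyc_rooted_def by blast
  ultimately show "\<exists>\<pi>. starts_vw V v w \<pi> \<and> perm_orient E \<pi> \<in> kappa_class V E P" by blast
qed

lemma Theta_kappa_class_vw_first:
  assumes P: "P \<in> Acyc_rooted V E v" and vw: "vw_first P"
  shows "Theta V E v w (kappa_class V E P) =
    Inr (kappa_class (contract_vertices V v w) (contract_edges E v w) (contract_orient v w P))"
proof -
  have ex: "\<exists>\<pi>. starts_vw V v w \<pi> \<and> perm_orient E \<pi> \<in> kappa_class V E P"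
    using perm_orient_in_kappa_class_iff[OF P] vw by blast
  define Q where "Q = perm_orient E (SOME \<pi>. starts_vw V v w \<pi> \<and> perm_orient E \<pi> \<in> kappa_class V E P)"
  have "\<exists>\<pi>. starts_vw V v w \<pi> \<and> perm_orient E \<pi> = Q" "(P, Q) \<in> kappa_rel V E"
    using someI_ex[OF ex] unfolding Q_def kappa_class_def by blast+
  then have "Q \<in> Acyc E" "vw_first Q" "(Q, P) \<in> kappa_rel V E"
    using perm_orient_Acyc[OF simple] vw_first_iff_perm_orient kappa_equiv[OF simple]
    unfolding starts_vw_def equiv_def sym_def by blast+
  then have "(contract_orient v w Q, contract_orient v w P) \<in>
      kappa_rel (contract_vertices V v w) (contract_edges E v w)"
    using kappa_rel_vw_first P unfolding Acyc_rooted_def by blast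
  then have "kappa_class (contract_vertices V v w) (contract_edges E v w) (contract_orient v w Q) =
      kappa_class (contract_vertices V v w) (contract_edges E v w) (contract_orient v w P)"
    using equiv_class_eq[OF kappa_equiv[OF simple_contracted]] unfolding kappa_class_def by blast
  then show ?thesis using ex unfolding Theta_def Q_def by simp
qed

lemma Theta_kappa_class_not_vw_first:
  assumes P: "P \<in> Acyc_rooted V E v" and vw: "\<not> vw_first P"
  shows "Theta V E v w (kappa_class V E P) = Inl (kappa_class V (E - {{v, w}}) (delete_orient v w P))"
proof -
  have "P \<in> kappa_class V E P"
    using equiv_class_self[OF kappa_equiv[OF simple]] P unfolding kappa_class_def Acyc_rooted_def by blast
  then have "(P, SOME Q. Q \<in> kappa_class V E P) \<in> kappa_rel V E"
    using someI[of "\<lambda>Q. Q \<in> kappa_class V E P"] unfolding kappa_class_def by blast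
  then have "kappa_class V (E - {{v, w}}) (delete_orient v w (SOME Q. Q \<in> kappa_class V E P)) =
      kappa_class V (E - {{v, w}}) (delete_orient v w P)"
    using delete_orient_kappa_rel equiv_class_eq[OF kappa_equiv[OF simple_deleted]]
    unfolding kappa_class_def by metis
  then show ?thesis
    using perm_orient_in_kappa_class_iff[OF P] vw unfolding Theta_def by simp
qed

definition theta_rep :: "('a \<times> 'a) set \<Rightarrow> ('a \<times> 'a) set + ('a \<times> 'a) set" where
  "theta_rep P = (if vw_first P then Inr (contract_orient v w P) else Inl (delete_orient v w P))"

definition theta_rep_inv :: "('a \<times> 'a) set + ('a \<times> 'a) set \<Rightarrow> ('a \<times> 'a) set" where
  "theta_rep_inv = case_sum (insert (v, w)) expand_orient"

lemma Theta_kappa_class: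
  assumes "P \<in> Acyc_rooted V E v"
  shows "Theta V E v w (kappa_class V E P) =
    map_sum (kappa_class V (E - {{v, w}})) (kappa_class (contract_vertices V v w) (contract_edges E v w))
      (theta_rep P)"
  using Theta_kappa_class_vw_first[OF assms] Theta_kappa_class_not_vw_first[OF assms]
  unfolding theta_rep_def by simp

abbreviation deleted_reps :: "('a \<times> 'a) set set" where
  "deleted_reps \<equiv> Acyc_rooted V (E - {{v, w}}) v"

abbreviation contracted_reps :: "('a \<times> 'a) set set" where
  "contracted_reps \<equiv> Acyc_rooted (contract_vertices V v w) (contract_edges E v w) v"

lemma theta_rep_mem:
  assumes "P \<in> Acyc_rooted V E v"
  shows "theta_rep P \<in> deleted_reps <+> contracted_reps"
proof (cases "vw_first P")
  case True
  then show ?thesis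
    using assms contract_orient_Acyc unique_source_contract_orient_iff
    unfolding theta_rep_def Acyc_rooted_def by (simp add: InrI)
next
  case False
  then show ?thesis
    using assms delete_orient_Acyc unique_source_delete_orient
    unfolding theta_rep_def Acyc_rooted_def by (simp add: InlI)
qed

lemma theta_rep_inv_theta_rep:
  assumes "P \<in> Acyc_rooted V E v"
  shows "theta_rep_inv (theta_rep P) = P"
  using assms insert_delete_orient[of P] expand_contract_orient[of P]
  unfolding theta_rep_def theta_rep_inv_def Acyc_rooted_def unique_source_def by simp

lemma theta_rep_inv_mem:
  assumes "S \<in> deleted_reps <+> contracted_reps"
  shows "theta_rep_inv S \<in> Acyc_rooted V E v \<and> theta_rep (theta_rep_inv S) = S"
  using assms
proof (rule PlusE)
  fix Q assume Q: "S = Inl Q" "Q \<in> deleted_reps"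
  then have "is_source Q v" unfolding Acyc_rooted_def unique_source_def by blast
  then show ?thesis
    using Q insert_vw_Acyc unique_source_insert_vw delete_orient_insert
    unfolding theta_rep_inv_def theta_rep_def Acyc_rooted_def by simp
next
  fix R assume R: "S = Inr R" "R \<in> contracted_reps"
  then have "is_source R v" unfolding Acyc_rooted_def unique_source_def by blast
  then have "expand_orient R \<in> Acyc E" "vw_first (expand_orient R)"
    using R expand_orient_Acyc vw_first_expand_orient unfolding Acyc_rooted_def by simp_all
  then show ?thesis
    using R unique_source_contract_orient_iff contract_expand_orient
    unfolding theta_rep_inv_def theta_rep_def Acyc_rooted_def by force
qed

lemma bij_betw_theta_rep: "bij_betw theta_rep (Acyc_rooted V E v) (deleted_reps <+> contracted_reps)"
  by (rule bij_betw_byWitness[where f' = theta_rep_inv])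
    (use theta_rep_inv_theta_rep theta_rep_mem theta_rep_inv_mem in blast)+

end

theorem theorem2:
  fixes V :: "'a set" and E :: "'a set set" and v w :: 'a
  assumes "simple_graph V E"
    and "connected_graph V E"
    and "cycle_edge E {v, w}"
  shows "bij_betw (Theta V E v w) (kappa_classes V E)
           (kappa_classes V (E - {{v, w}}) <+>
            kappa_classes (contract_vertices V v w) (contract_edges E v w))"
proof -
  interpret cycle_edge_graph V E v w using assms by unfold_locales
  let ?\<kappa>' = "kappa_class V (E - {{v, w}})"
    and ?\<kappa>'' = "kappa_class (contract_vertices V v w) (contract_edges E v w)"
  have "v \<in> contract_vertices V v w" using v_in_V v_neq_w unfolding contract_vertices_def by blast
  then have "bij_betw (map_sum ?\<kappa>' ?\<kappa>'') (deleted_reps <+> contracted_reps)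
      (kappa_classes V (E - {{v, w}}) <+> kappa_classes (contract_vertices V v w) (contract_edges E v w))"
    by (intro bij_betw_map_sum bij_betw_kappa_class
        simple_deleted connected_deleted v_in_V simple_contracted connected_contracted)
  with bij_betw_theta_rep have "bij_betw (map_sum ?\<kappa>' ?\<kappa>'' \<circ> theta_rep) (Acyc_rooted V E v)
      (kappa_classes V (E - {{v, w}}) <+> kappa_classes (contract_vertices V v w) (contract_edges E v w))"
    by (rule bij_betw_trans)
  then have "bij_betw (Theta V E v w \<circ> kappa_class V E) (Acyc_rooted V E v)
      (kappa_classes V (E - {{v, w}}) <+> kappa_classes (contract_vertices V v w) (contract_edges E v w))"
    by (rule bij_betw_cong[THEN iffD2, rotated]) (simp add: Theta_kappa_class)
  then show ?thesis
    using bij_betw_comp_iff[OF bij_betw_kappa_class[OF simple connected v_in_V]] by blast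
qed

end
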